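(* Let $I$ be a group, $f:I\to G$ a group epimorphism with kernel $K$, and $\varphi:I\to\mathbb R^m$ a surjective quasimorphism such that (i) $\varphi(uv)=\varphi(u)+\varphi(v)$ for all $u\in K$, $v\in I$, and (ii) $A:=\varphi(K)\subset\mathbb Z^m$. Suppose $C_\varphi+D_\varphi>0$. Then (1) $cl(w)\ge\dfrac{\theta_w+D_\varphi}{C_\varphi+D_\varphi}$ for every $w\in G$, $w\ne e$; (2) if $G\ne\{e\}$, then $cld\,G\ge\dfrac{\theta_\varphi+D_\varphi}{C_\varphi+D_\varphi}$.
   Context: $\mathbb R^m$ carries the norm $\|x\|=\max_i|x_i|$. A map $\varphi:I\to\mathbb R^m$ is a quasimorphism if its defect $D_\varphi:=\sup_{a,b\in I}\|\varphi(ab)-\varphi(a)-\varphi(b)\|$ is finite. $C_\varphi:=\sup\{\|\varphi([a,b])\|: a,b\in I\}$. Under (i), $A$ is a subgroup of $\mathbb Z^m$ and there is a well-defined surjective map $\widehat\varphi:G\to\mathbb R^m/A$, $\widehat\varphi(w)=\varphi(v)+A$ for any $v\in f^{-1}(w)$. For $w\in G$, $\theta_w:=\min\{\|y\|: y\in\widehat\varphi(w)\}$ (a minimum over an affine lattice), and $\theta_\varphi:=\sup_{w\in G}\theta_w$. $cl$ is the commutator length in $G$ ($\infty$ outside $[G,G]$) and $cld\,G=\sup cl(G)$. *)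

theory Defs
  imports "HOL-Analysis.Analysis" "HOL-Algebra.Algebra" "HOL-Library.Extended_Real"
begin

definition maxnorm :: "real^'m::finite \<Rightarrow> real" where
  "maxnorm x = Max (range (\<lambda>i. \<bar>x $ i\<bar>))"

definition gcomm :: "('a, 'b) monoid_scheme \<Rightarrow> 'a \<Rightarrow> 'a \<Rightarrow> 'a" where
  "gcomm G a b = a \<otimes>\<^bsub>G\<^esub> b \<otimes>\<^bsub>G\<^esub> inv\<^bsub>G\<^esub> a \<otimes>\<^bsub>G\<^esub> inv\<^bsub>G\<^esub> b"

definition defect :: "('a, 'b) monoid_scheme \<Rightarrow> ('a \<Rightarrow> real^'m::finite) \<Rightarrow> real" where
  "defect I \<phi> = Sup {maxnorm (\<phi> (a \<otimes>\<^bsub>I\<^esub> b) - \<phi> a - \<phi> b) | a b. a \<in> carrier I \<and> b \<in> carrier I}"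

definition quasimorphism :: "('a, 'b) monoid_scheme \<Rightarrow> ('a \<Rightarrow> real^'m::finite) \<Rightarrow> bool" where
  "quasimorphism I \<phi> \<longleftrightarrow>
     bdd_above {maxnorm (\<phi> (a \<otimes>\<^bsub>I\<^esub> b) - \<phi> a - \<phi> b) | a b. a \<in> carrier I \<and> b \<in> carrier I}"

definition commbound :: "('a, 'b) monoid_scheme \<Rightarrow> ('a \<Rightarrow> real^'m::finite) \<Rightarrow> real" where
  "commbound I \<phi> = Sup {maxnorm (\<phi> (gcomm I a b)) | a b. a \<in> carrier I \<and> b \<in> carrier I}"

text \<open>hat phi (w) = phi(v) + A for v in f^-1(w); rendered as the union over all such v
  (under hypothesis (i) all these cosets coincide).\<close>
definition phihat :: "('a, 'b) monoid_scheme \<Rightarrow> ('c, 'd) monoid_scheme \<Rightarrow> ('a \<Rightarrow> 'c)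
    \<Rightarrow> ('a \<Rightarrow> real^'m::finite) \<Rightarrow> 'c \<Rightarrow> (real^'m) set" where
  "phihat I G f \<phi> w = {\<phi> v + a | v a. v \<in> carrier I \<and> f v = w \<and> a \<in> \<phi> ` kernel I G f}"

definition theta :: "('a, 'b) monoid_scheme \<Rightarrow> ('c, 'd) monoid_scheme \<Rightarrow> ('a \<Rightarrow> 'c)
    \<Rightarrow> ('a \<Rightarrow> real^'m::finite) \<Rightarrow> 'c \<Rightarrow> real" where
  "theta I G f \<phi> w = Inf (maxnorm ` phihat I G f \<phi> w)"

definition theta_sup :: "('a, 'b) monoid_scheme \<Rightarrow> ('c, 'd) monoid_scheme \<Rightarrow> ('a \<Rightarrow> 'c)
    \<Rightarrow> ('a \<Rightarrow> real^'m::finite) \<Rightarrow> ereal" where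
  "theta_sup I G f \<phi> = (SUP w\<in>carrier G. ereal (theta I G f \<phi> w))"

text \<open>Commutator length (infinity if w is not a product of commutators).\<close>
definition cl :: "('c, 'd) monoid_scheme \<Rightarrow> 'c \<Rightarrow> enat" where
  "cl G w = Inf {enat n | n. \<exists>xs ys. length xs = n \<and> length ys = n \<and>
      set xs \<subseteq> carrier G \<and> set ys \<subseteq> carrier G \<and>
      w = foldr (\<otimes>\<^bsub>G\<^esub>) (map2 (gcomm G) xs ys) \<one>\<^bsub>G\<^esub>}"

definition cld :: "('c, 'd) monoid_scheme \<Rightarrow> enat" where
  "cld G = (SUP w\<in>carrier G. cl G w)"

end

(*
  If cl(w) = n, write w as a product of n commutators in G and lift each factor along the
  epimorphism f, obtaining v in I with f v = w. A quasimorphism with phi(1) = 0 is bounded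
  by C on commutators (indeed C <= 5 D), and every multiplication adds at most D, so
  |phi(v)| <= n C + (n - 1) D. Since phi(v) lies in the coset hat-phi(w), theta_w <= |phi(v)|,
  which rearranges to both bounds. Hypothesis (i) is needed only for phi(1) = 0.
*)
theory Submission
  imports Defs
begin

lemma maxnorm_eq_infnorm: "maxnorm x = infnorm x"
  unfolding maxnorm_def infnorm_cart by (simp add: cSup_eq_Max full_SetCompr_eq)

lemma maxnorm_defect_le:
  assumes "quasimorphism I \<phi>" "a \<in> carrier I" "b \<in> carrier I"
  shows "maxnorm (\<phi> (a \<otimes>\<^bsub>I\<^esub> b) - \<phi> a - \<phi> b) \<le> defect I \<phi>"
  unfolding defect_def
  by (rule cSup_upper) (use assms in \<open>auto simp: quasimorphism_def\<close>)

lemma defect_nonneg: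
  assumes "group I" "quasimorphism I \<phi>"
  shows "0 \<le> defect I \<phi>"
proof -
  interpret group I by fact
  show ?thesis
    using maxnorm_defect_le[OF assms(2) one_closed one_closed]
    by (simp add: maxnorm_eq_infnorm) (meson infnorm_pos_le order_trans)
qed

lemma maxnorm_gcomm_le_defect:
  assumes "group I" "quasimorphism I \<phi>" "\<phi> \<one>\<^bsub>I\<^esub> = 0"
    and a: "a \<in> carrier I" and b: "b \<in> carrier I"
  shows "maxnorm (\<phi> (gcomm I a b)) \<le> 5 * defect I \<phi>"
proof -
  interpret group I by fact
  define e where "e x y = \<phi> (x \<otimes>\<^bsub>I\<^esub> y) - \<phi> x - \<phi> y" for x y
  have e_le: "infnorm (e x y) \<le> defect I \<phi>" if "x \<in> carrier I" "y \<in> carrier I" for x y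
    using maxnorm_defect_le[OF assms(2) that] by (simp add: e_def maxnorm_eq_infnorm)
  \<comment> \<open>Expand the commutator step by step; the two terms \<open>\<phi> x + \<phi> (inv x)\<close> that remain are
    defects too, because \<open>\<phi> \<one> = 0\<close>.\<close>
  have "\<phi> (gcomm I a b) = e (a \<otimes>\<^bsub>I\<^esub> b \<otimes>\<^bsub>I\<^esub> inv\<^bsub>I\<^esub> a) (inv\<^bsub>I\<^esub> b) + e (a \<otimes>\<^bsub>I\<^esub> b) (inv\<^bsub>I\<^esub> a)
      + e a b - e a (inv\<^bsub>I\<^esub> a) - e b (inv\<^bsub>I\<^esub> b)"
    using assms(3) a b by (simp add: e_def gcomm_def algebra_simps)
  also have "infnorm \<dots> \<le> 5 * defect I \<phi>"
    using e_le[of "a \<otimes>\<^bsub>I\<^esub> b \<otimes>\<^bsub>I\<^esub> inv\<^bsub>I\<^esub> a" "inv\<^bsub>I\<^esub> b"] e_le[of "a \<otimes>\<^bsub>I\<^esub> b" "inv\<^bsub>I\<^esub> a"]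
      e_le[of a b] e_le[of a "inv\<^bsub>I\<^esub> a"] e_le[of b "inv\<^bsub>I\<^esub> b"] a b
    by (smt (verit) infnorm_neg infnorm_triangle diff_conv_add_uminus inv_closed m_closed)
  finally show ?thesis by (simp add: maxnorm_eq_infnorm)
qed

lemma maxnorm_gcomm_le_commbound:
  assumes "group I" "quasimorphism I \<phi>" "\<phi> \<one>\<^bsub>I\<^esub> = 0" "a \<in> carrier I" "b \<in> carrier I"
  shows "maxnorm (\<phi> (gcomm I a b)) \<le> commbound I \<phi>"
  unfolding commbound_def
proof (rule cSup_upper)
  show "bdd_above {maxnorm (\<phi> (gcomm I a b)) | a b. a \<in> carrier I \<and> b \<in> carrier I}"
    using maxnorm_gcomm_le_defect[OF assms(1-3)] by (auto intro!: bdd_aboveI[of _ "5 * defect I \<phi>"])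
qed (use assms in blast)

lemma commbound_nonneg:
  assumes "group I" "quasimorphism I \<phi>" "\<phi> \<one>\<^bsub>I\<^esub> = 0"
  shows "0 \<le> commbound I \<phi>"
proof -
  interpret group I by fact
  show ?thesis
    using maxnorm_gcomm_le_commbound[OF assms one_closed one_closed]
    by (simp add: maxnorm_eq_infnorm) (meson infnorm_pos_le order_trans)
qed

lemma (in group) gcomm_closed [intro, simp]:
  "a \<in> carrier G \<Longrightarrow> b \<in> carrier G \<Longrightarrow> gcomm G a b \<in> carrier G"
  by (simp add: gcomm_def)

lemma (in group) commutator_product_closed:
  "set as \<subseteq> carrier G \<Longrightarrow> set bs \<subseteq> carrier G \<Longrightarrow>
    foldr (\<otimes>) (map2 (gcomm G) as bs) \<one> \<in> carrier G"
proof (induction as arbitrary: bs)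
  case (Cons a as)
  then show ?case by (cases bs) auto
qed simp

lemma maxnorm_commutator_product_le:
  assumes "group I" "quasimorphism I \<phi>" "\<phi> \<one>\<^bsub>I\<^esub> = 0"
  shows "length as = length bs \<Longrightarrow> set as \<subseteq> carrier I \<Longrightarrow> set bs \<subseteq> carrier I \<Longrightarrow> as \<noteq> [] \<Longrightarrow>
    maxnorm (\<phi> (foldr (\<otimes>\<^bsub>I\<^esub>) (map2 (gcomm I) as bs) \<one>\<^bsub>I\<^esub>)) + defect I \<phi>
      \<le> length as * (commbound I \<phi> + defect I \<phi>)"
proof (induction as bs rule: list_induct2)
  case Nil
  then show ?case by simp
next
  case (Cons a as b bs)
  interpret group I by fact
  let ?c = "gcomm I a b" and ?v = "foldr (\<otimes>\<^bsub>I\<^esub>) (map2 (gcomm I) as bs) \<one>\<^bsub>I\<^esub>"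
  have ab: "a \<in> carrier I" "b \<in> carrier I" and c: "?c \<in> carrier I"
    using Cons.prems by auto
  have v: "?v \<in> carrier I"
    using Cons.prems by (auto intro: commutator_product_closed)
  have c_le: "maxnorm (\<phi> ?c) \<le> commbound I \<phi>"
    by (rule maxnorm_gcomm_le_commbound[OF assms ab])
  have prod_eq: "foldr (\<otimes>\<^bsub>I\<^esub>) (map2 (gcomm I) (a # as) (b # bs)) \<one>\<^bsub>I\<^esub> = ?c \<otimes>\<^bsub>I\<^esub> ?v"
    by simp
  show ?case
  proof (cases "as = []")
    case True
    then show ?thesis using c c_le by simp
  next
    case False
    define e where "e = \<phi> (?c \<otimes>\<^bsub>I\<^esub> ?v) - \<phi> ?c - \<phi> ?v"
    have split: "\<phi> (?c \<otimes>\<^bsub>I\<^esub> ?v) = e + \<phi> ?c + \<phi> ?v"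
      by (simp add: e_def)
    have "maxnorm (\<phi> (?c \<otimes>\<^bsub>I\<^esub> ?v)) \<le> maxnorm e + maxnorm (\<phi> ?c) + maxnorm (\<phi> ?v)"
      unfolding split maxnorm_eq_infnorm
      using infnorm_triangle[of "e + \<phi> ?c" "\<phi> ?v"] infnorm_triangle[of e "\<phi> ?c"] by linarith
    moreover have "maxnorm (\<phi> ?v) + defect I \<phi> \<le> length as * (commbound I \<phi> + defect I \<phi>)"
      using Cons.IH Cons.prems False by auto
    ultimately show ?thesis
      unfolding prod_eq e_def using maxnorm_defect_le[OF assms(2) c v] c_le by (simp add: distrib_right)
  qed
qed

lemma cl_enatE:
  assumes "cl G w = enat n"
  obtains xs ys where "length xs = n" "length ys = n" "set xs \<subseteq> carrier G" "set ys \<subseteq> carrier G"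
    "w = foldr (\<otimes>\<^bsub>G\<^esub>) (map2 (gcomm G) xs ys) \<one>\<^bsub>G\<^esub>"
proof -
  let ?S = "{enat n | n. \<exists>xs ys. length xs = n \<and> length ys = n \<and>
      set xs \<subseteq> carrier G \<and> set ys \<subseteq> carrier G \<and>
      w = foldr (\<otimes>\<^bsub>G\<^esub>) (map2 (gcomm G) xs ys) \<one>\<^bsub>G\<^esub>}"
  have Inf_eq: "Inf ?S = enat n"
    using assms by (simp only: cl_def)
  then have "?S \<noteq> {}"
    by (metis Inf_empty enat.simps(3) top_enat_def)
  then have "Inf ?S \<in> ?S"
    by (meson ex_in_conv wellorder_InfI)
  then have "enat n \<in> ?S"
    unfolding Inf_eq .
  then show ?thesis
    using that by auto
qed

lemma (in group_hom) hom_commutator_product: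
  "length as = length bs \<Longrightarrow> set as \<subseteq> carrier G \<Longrightarrow> set bs \<subseteq> carrier G \<Longrightarrow>
    h (foldr (\<otimes>\<^bsub>G\<^esub>) (map2 (gcomm G) as bs) \<one>\<^bsub>G\<^esub>)
      = foldr (\<otimes>\<^bsub>H\<^esub>) (map2 (gcomm H) (map h as) (map h bs)) \<one>\<^bsub>H\<^esub>"
  by (induction rule: list_induct2) (simp_all add: gcomm_def hom_inv G.commutator_product_closed)

lemma (in group_hom) kernel_additive_imp_zero_at_one:
  fixes \<phi> :: "'a \<Rightarrow> 'v::cancel_comm_monoid_add"
  assumes "\<forall>u\<in>kernel G H h. \<forall>v\<in>carrier G. \<phi> (u \<otimes>\<^bsub>G\<^esub> v) = \<phi> u + \<phi> v"
  shows "\<phi> \<one>\<^bsub>G\<^esub> = 0"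
proof -
  have "\<one>\<^bsub>G\<^esub> \<in> kernel G H h"
    by (simp add: kernel_def)
  then have "\<phi> \<one>\<^bsub>G\<^esub> + 0 = \<phi> \<one>\<^bsub>G\<^esub> + \<phi> \<one>\<^bsub>G\<^esub>"
    using assms by force
  then show ?thesis
    by (simp only: add_left_cancel)
qed

lemma (in group_hom) theta_le_maxnorm:
  fixes \<phi> :: "'a \<Rightarrow> real^'m::finite"
  assumes "\<phi> \<one>\<^bsub>G\<^esub> = 0" "v \<in> carrier G"
  shows "theta G H h \<phi> (h v) \<le> maxnorm (\<phi> v)"
  unfolding theta_def
proof (rule cInf_lower)
  have "\<one>\<^bsub>G\<^esub> \<in> kernel G H h"
    by (simp add: kernel_def)
  then have "\<phi> v + \<phi> \<one>\<^bsub>G\<^esub> \<in> phihat G H h \<phi> (h v)"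
    unfolding phihat_def using assms(2) by blast
  then show "maxnorm (\<phi> v) \<in> maxnorm ` phihat G H h \<phi> (h v)"
    using assms(1) by auto
  show "bdd_below (maxnorm ` phihat G H h \<phi> (h v))"
    by (rule bdd_belowI2[of _ 0]) (simp add: maxnorm_eq_infnorm infnorm_pos_le)
qed

lemma (in group_hom) theta_add_defect_le_cl:
  assumes surj: "h ` carrier G = carrier H" and "quasimorphism G \<phi>" "\<phi> \<one>\<^bsub>G\<^esub> = 0"
    and w: "w \<in> carrier H" "w \<noteq> \<one>\<^bsub>H\<^esub>" and "cl H w = enat n"
  shows "theta G H h \<phi> w + defect G \<phi> \<le> n * (commbound G \<phi> + defect G \<phi>)"
proof -
  obtain xs ys where xy: "length xs = n" "length ys = n" "set xs \<subseteq> carrier H" "set ys \<subseteq> carrier H"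
    and w_eq: "w = foldr (\<otimes>\<^bsub>H\<^esub>) (map2 (gcomm H) xs ys) \<one>\<^bsub>H\<^esub>"
    using cl_enatE[OF assms(6)] by blast
  define lift where "lift = map (inv_into (carrier G) h)"
  have lift: "set (lift zs) \<subseteq> carrier G" "map h (lift zs) = zs" if "set zs \<subseteq> carrier H" for zs
    using that surj by (auto simp: lift_def inv_into_into f_inv_into_f intro!: map_idI)
  have len: "length (lift xs) = n" "length (lift ys) = n"
    using xy by (simp_all add: lift_def)
  define v where "v = foldr (\<otimes>\<^bsub>G\<^esub>) (map2 (gcomm G) (lift xs) (lift ys)) \<one>\<^bsub>G\<^esub>"
  have v: "v \<in> carrier G"
    unfolding v_def using lift(1) xy(3,4) by (intro G.commutator_product_closed)
  have "h v = w"
    unfolding v_def w_eq using hom_commutator_product[of "lift xs" "lift ys"] lift xy len by simp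
  then have "theta G H h \<phi> w \<le> maxnorm (\<phi> v)"
    using theta_le_maxnorm[of \<phi>, OF assms(3) v] by simp
  moreover have "lift xs \<noteq> []"
    using w w_eq xy len by auto
  then have "maxnorm (\<phi> v) + defect G \<phi> \<le> n * (commbound G \<phi> + defect G \<phi>)"
    using maxnorm_commutator_product_le[OF G.group_axioms assms(2,3), of "lift xs" "lift ys"]
      lift(1) xy(3,4) len by (simp add: v_def)
  ultimately show ?thesis
    by linarith
qed

lemma cl_eq_0_imp_one: "cl G w = 0 \<Longrightarrow> w = \<one>\<^bsub>G\<^esub>"
  unfolding zero_enat_def by (erule cl_enatE) simp

lemma (in group_hom) theta_add_defect_le_cld:
  assumes surj: "h ` carrier G = carrier H" and "quasimorphism G \<phi>" "\<phi> \<one>\<^bsub>G\<^esub> = 0"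
    and nontrivial: "carrier H \<noteq> {\<one>\<^bsub>H\<^esub>}" and cld: "cld H = enat N" and w: "w \<in> carrier H"
  shows "theta G H h \<phi> w + defect G \<phi> \<le> N * (commbound G \<phi> + defect G \<phi>)"
proof -
  have cl_le: "cl H x \<le> enat N" if "x \<in> carrier H" for x
    using SUP_upper[OF that, of "cl H"] cld by (simp add: cld_def)
  have C: "0 \<le> commbound G \<phi>" and D: "0 \<le> defect G \<phi>"
    using commbound_nonneg[OF G.group_axioms assms(2,3)] defect_nonneg[OF G.group_axioms assms(2)] .
  show ?thesis
  proof (cases "w = \<one>\<^bsub>H\<^esub>")
    case True
    obtain w0 where w0: "w0 \<in> carrier H" "w0 \<noteq> \<one>\<^bsub>H\<^esub>"
      using nontrivial H.one_closed by blast
    then have "cl H w0 \<noteq> 0"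
      using cl_eq_0_imp_one[of H w0] by blast
    then have "1 \<le> N"
      using cl_le[OF w0(1)] by (cases "cl H w0") (simp_all add: zero_enat_def)
    then have "commbound G \<phi> + defect G \<phi> \<le> N * (commbound G \<phi> + defect G \<phi>)"
      using mult_right_mono[of 1 "real N" "commbound G \<phi> + defect G \<phi>"] C D by simp
    moreover have "theta G H h \<phi> w \<le> 0"
      using theta_le_maxnorm[of \<phi>, OF assms(3) G.one_closed] True assms(3)
      by (simp add: maxnorm_eq_infnorm infnorm_0)
    ultimately show ?thesis
      using C by linarith
  next
    case False
    obtain n where n: "cl H w = enat n" "n \<le> N"
      using cl_le[OF w] by (cases "cl H w") auto
    then have "n * (commbound G \<phi> + defect G \<phi>) \<le> N * (commbound G \<phi> + defect G \<phi>)"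
      using C D by (intro mult_right_mono) auto
    then show ?thesis
      using theta_add_defect_le_cl[OF surj assms(2,3) w False n(1)] by linarith
  qed
qed

lemma (in group_hom) cl_lower_bound:
  assumes "h ` carrier G = carrier H" "quasimorphism G \<phi>" "\<phi> \<one>\<^bsub>G\<^esub> = 0"
    and "w \<in> carrier H" "w \<noteq> \<one>\<^bsub>H\<^esub>" and pos: "0 < commbound G \<phi> + defect G \<phi>"
  shows "ereal ((theta G H h \<phi> w + defect G \<phi>) / (commbound G \<phi> + defect G \<phi>)) \<le> ereal_of_enat (cl H w)"
proof (cases "cl H w")
  case (enat n)
  then show ?thesis
    using theta_add_defect_le_cl[OF assms(1-5) enat] pos by (simp add: divide_le_eq)
qed simp

lemma (in group_hom) cld_lower_bound:
  assumes "h ` carrier G = carrier H" "quasimorphism G \<phi>" "\<phi> \<one>\<^bsub>G\<^esub> = 0"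
    and "carrier H \<noteq> {\<one>\<^bsub>H\<^esub>}" and pos: "0 < commbound G \<phi> + defect G \<phi>"
  shows "(theta_sup G H h \<phi> + ereal (defect G \<phi>)) / ereal (commbound G \<phi> + defect G \<phi>)
    \<le> ereal_of_enat (cld H)"
proof (cases "cld H")
  case (enat N)
  let ?C = "commbound G \<phi>" and ?D = "defect G \<phi>"
  have sup_le: "theta_sup G H h \<phi> \<le> ereal (N * (?C + ?D) - ?D)"
    unfolding theta_sup_def using theta_add_defect_le_cld[OF assms(1-4) enat]
    by (intro SUP_least) (simp add: le_diff_eq)
  have "theta_sup G H h \<phi> + ereal ?D \<le> ereal (N * (?C + ?D))"
    using add_right_mono[OF sup_le, of "ereal ?D"] by simp
  then have "(theta_sup G H h \<phi> + ereal ?D) / ereal (?C + ?D) \<le> ereal (N * (?C + ?D)) / ereal (?C + ?D)"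
    using pos by (intro ereal_divide_right_mono) auto
  also have "\<dots> = ereal N"
    using pos by simp
  finally show ?thesis
    using enat by simp
qed simp

theorem proposition2:
  fixes I :: "('a, 'b) monoid_scheme" and G :: "('c, 'd) monoid_scheme"
    and f :: "'a \<Rightarrow> 'c" and \<phi> :: "'a \<Rightarrow> real^'m::finite"
  assumes "group I" and "group G"
    and "f \<in> epi I G"
    and "quasimorphism I \<phi>"
    and "\<phi> ` carrier I = UNIV"
    and "\<forall>u\<in>kernel I G f. \<forall>v\<in>carrier I. \<phi> (u \<otimes>\<^bsub>I\<^esub> v) = \<phi> u + \<phi> v"
    and "\<forall>u\<in>kernel I G f. \<forall>i. \<phi> u $ i \<in> \<int>"
    and "commbound I \<phi> + defect I \<phi> > 0"
  shows "(\<forall>w\<in>carrier G. w \<noteq> \<one>\<^bsub>G\<^esub> \<longrightarrow>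
           ereal ((theta I G f \<phi> w + defect I \<phi>) / (commbound I \<phi> + defect I \<phi>))
             \<le> ereal_of_enat (cl G w))
       \<and> (carrier G \<noteq> {\<one>\<^bsub>G\<^esub>} \<longrightarrow>
           (theta_sup I G f \<phi> + ereal (defect I \<phi>)) / ereal (commbound I \<phi> + defect I \<phi>)
             \<le> ereal_of_enat (cld G))"
proof -
  interpret group_hom I G f
    using assms(1-3) by (simp add: group_hom_def group_hom_axioms_def epi_def)
  have surj: "f ` carrier I = carrier G"
    using assms(3) by (simp add: epi_def)
  have one: "\<phi> \<one>\<^bsub>I\<^esub> = 0"
    using kernel_additive_imp_zero_at_one[OF assms(6)] .
  show ?thesis
    using cl_lower_bound[OF surj assms(4) one _ _ assms(8)] cld_lower_bound[OF surj assms(4) one _ assms(8)]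
    by blast
qed

end
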